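(* Assume the setting of the context with $K\ge2$ temperatures, and assume $\rho$ is not constant on $S^K$. Let $\lambda>0$ and $h(\mathbf{x})=\lambda\rho(\mathbf{x})$. Then the optimal cost \[ \gamma^*=\min_{\nu\in\mathcal{P}(S^K)}\Big\{J(\nu)+\sum_{\mathbf{x}\in S^K}h(\mathbf{x})\nu(\mathbf{x})\Big\} \] satisfies $\gamma^*<\lambda/K!$; in particular, for two temperatures, $\gamma^*<\lambda/2$.
   Context: **Dynamics.** $S$ is a finite set and $K\ge2$. For $k=1,\dots,K$, $\Gamma^k$ is an irreducible intensity matrix on $S$, reversible with respect to its unique invariant distribution $\mu_k$. Set $\mu=\mu_1\times\cdots\times\mu_K$. **Permutations and weights.** $\Sigma_K$ is the set of permutations of $\{1,\dots,K\}$, and $\mathbf{x}^\sigma=(x_{\sigma^{-1}(1)},\dots,x_{\sigma^{-1}(K)})$. Define $\rho(\mathbf{x})=\mu(\mathbf{x})/\sum_{\sigma}\mu(\mathbf{x}^\sigma)$. **Infinite swapping rates.** - $\Gamma^\infty$ is the rate matrix on $S^K$ with $\Gamma^\infty_{\mathbf{x},\mathbf{y}}=\sum_\sigma\rho(\mathbf{x}^\sigma)\Gamma^{\sigma(i)}_{x_i,y_i}$ when $\mathbf{y}$ differs from $\mathbf{x}$ exactly in coordinate $i$. For $K=2$: $\Gamma^\infty_{(x_1,x_2),(y_1,x_2)}=\rho(x_1,x_2)\Gamma^1_{x_1,y_1}+\rho(x_2,x_1)\Gamma^2_{x_1,y_1}$, and analogously for the second coordinate. - Off-diagonal rates between states differing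 in two or more coordinates are $0$. - $q^\infty(\mathbf{x})=\sum_{\mathbf{y}\ne\mathbf{x}}\Gamma^\infty_{\mathbf{x},\mathbf{y}}$ and $\bar\mu(\mathbf{x})=\frac1{K!}\sum_\sigma\mu(\mathbf{x}^\sigma)$. **Functional.** For $\nu\in\mathcal{P}(S^K)$ with $\theta=\nu/\bar\mu$, \[ J(\nu)=\sum_{\mathbf{x}}q^\infty(\mathbf{x})\theta(\mathbf{x})\bar\mu(\mathbf{x})-\sum_{\mathbf{x}\ne\mathbf{y}}\theta^{1/2}(\mathbf{x})\theta^{1/2}(\mathbf{y})\Gamma^\infty_{\mathbf{x},\mathbf{y}}\bar\mu(\mathbf{x}). \] *)

theory Defs
  imports "HOL-Analysis.Analysis" "HOL-Combinatorics.Permutations"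
begin

text \<open>Temperatures are indexed by 0..<K (instead of 1..K). Configurations in S^K are
functions nat => 'a, extensional (undefined) outside {0..<K}.\<close>

definition states :: "nat \<Rightarrow> (nat \<Rightarrow> 'a) set" where
  "states K = PiE {0..<K} (\<lambda>_. UNIV)"

definition perms :: "nat \<Rightarrow> (nat \<Rightarrow> nat) set" where
  "perms K = {\<sigma>. \<sigma> permutes {0..<K}}"

definition perm_state :: "(nat \<Rightarrow> 'a) \<Rightarrow> (nat \<Rightarrow> nat) \<Rightarrow> (nat \<Rightarrow> 'a)" where
  "perm_state x \<sigma> = x \<circ> inv \<sigma>"

definition intensity_matrix :: "('a::finite \<Rightarrow> 'a \<Rightarrow> real) \<Rightarrow> bool" where
  "intensity_matrix G \<longleftrightarrow> (\<forall>x y. x \<noteq> y \<longrightarrow> G x y \<ge> 0) \<and> (\<forall>x. (\<Sum>y\<in>UNIV. G x y) = 0)"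

definition irreducible_rates :: "('a \<Rightarrow> 'a \<Rightarrow> real) \<Rightarrow> bool" where
  "irreducible_rates G \<longleftrightarrow> (\<forall>x y. (x, y) \<in> {(a, b). a \<noteq> b \<and> G a b > 0}\<^sup>*)"

definition distribution :: "('a::finite \<Rightarrow> real) \<Rightarrow> bool" where
  "distribution m \<longleftrightarrow> (\<forall>x. m x \<ge> 0) \<and> (\<Sum>x\<in>UNIV. m x) = 1"

definition invariant_distribution :: "('a::finite \<Rightarrow> 'a \<Rightarrow> real) \<Rightarrow> ('a \<Rightarrow> real) \<Rightarrow> bool" where
  "invariant_distribution G m \<longleftrightarrow> distribution m \<and> (\<forall>y. (\<Sum>x\<in>UNIV. m x * G x y) = 0)"

definition reversible :: "('a \<Rightarrow> 'a \<Rightarrow> real) \<Rightarrow> ('a \<Rightarrow> real) \<Rightarrow> bool" where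
  "reversible G m \<longleftrightarrow> (\<forall>x y. m x * G x y = m y * G y x)"

definition mu_prod :: "nat \<Rightarrow> (nat \<Rightarrow> 'a \<Rightarrow> real) \<Rightarrow> (nat \<Rightarrow> 'a) \<Rightarrow> real" where
  "mu_prod K mu x = (\<Prod>k<K. mu k (x k))"

definition rho :: "nat \<Rightarrow> (nat \<Rightarrow> 'a \<Rightarrow> real) \<Rightarrow> (nat \<Rightarrow> 'a) \<Rightarrow> real" where
  "rho K mu x = mu_prod K mu x / (\<Sum>\<sigma>\<in>perms K. mu_prod K mu (perm_state x \<sigma>))"

definition Ginf :: "nat \<Rightarrow> (nat \<Rightarrow> 'a \<Rightarrow> 'a \<Rightarrow> real) \<Rightarrow> (nat \<Rightarrow> 'a \<Rightarrow> real)
    \<Rightarrow> (nat \<Rightarrow> 'a) \<Rightarrow> (nat \<Rightarrow> 'a) \<Rightarrow> real" where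
  "Ginf K G mu x y = (\<Sum>i<K. if x i \<noteq> y i \<and> (\<forall>j<K. j \<noteq> i \<longrightarrow> x j = y j)
       then (\<Sum>\<sigma>\<in>perms K. rho K mu (perm_state x \<sigma>) * G (\<sigma> i) (x i) (y i)) else 0)"

definition qinf :: "nat \<Rightarrow> (nat \<Rightarrow> 'a \<Rightarrow> 'a \<Rightarrow> real) \<Rightarrow> (nat \<Rightarrow> 'a \<Rightarrow> real)
    \<Rightarrow> (nat \<Rightarrow> 'a) \<Rightarrow> real" where
  "qinf K G mu x = (\<Sum>y\<in>states K - {x}. Ginf K G mu x y)"

definition mubar :: "nat \<Rightarrow> (nat \<Rightarrow> 'a \<Rightarrow> real) \<Rightarrow> (nat \<Rightarrow> 'a) \<Rightarrow> real" where
  "mubar K mu x = (1 / fact K) * (\<Sum>\<sigma>\<in>perms K. mu_prod K mu (perm_state x \<sigma>))"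

definition prob_states :: "nat \<Rightarrow> ((nat \<Rightarrow> 'a) \<Rightarrow> real) set" where
  "prob_states K = {\<nu>. (\<forall>x\<in>states K. \<nu> x \<ge> 0) \<and> (\<Sum>x\<in>states K. \<nu> x) = 1}"

definition Jfun :: "nat \<Rightarrow> (nat \<Rightarrow> 'a \<Rightarrow> 'a \<Rightarrow> real) \<Rightarrow> (nat \<Rightarrow> 'a \<Rightarrow> real)
    \<Rightarrow> ((nat \<Rightarrow> 'a) \<Rightarrow> real) \<Rightarrow> real" where
  "Jfun K G mu \<nu> =
     (let \<theta> = (\<lambda>x. \<nu> x / mubar K mu x) in
      (\<Sum>x\<in>states K. qinf K G mu x * \<theta> x * mubar K mu x)
      - (\<Sum>x\<in>states K. \<Sum>y\<in>states K - {x}.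
           sqrt (\<theta> x) * sqrt (\<theta> y) * Ginf K G mu x y * mubar K mu x))"

end

theory Submission
  imports Defs
begin

text \<open>The rates \<open>Ginf\<close> are reversible with respect to \<open>mubar\<close>, so \<open>J(\<nu>)\<close> is the Dirichlet
form of \<open>sqrt (\<nu> / mubar)\<close>; in particular \<open>J \<ge> 0\<close> and \<open>J(mubar) = 0\<close>, while the cost of
\<open>mubar\<close> is exactly \<open>\<lambda>/K!\<close> because \<open>\<rho>(x\<^sup>\<sigma>)\<close> sums to one over \<open>\<sigma>\<close>. As \<open>\<rho>\<close> is not constant,
some state \<open>z\<close> has \<open>\<rho>(z) \<noteq> 1/K!\<close>. Perturbing \<open>mubar\<close> to \<open>\<nu> \<propto> (1 + t 1\<^sub>z)\<^sup>2 mubar\<close> changes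
\<open>J\<close> only at second order in \<open>t\<close> but the cost at first order, with slope
\<open>2\<lambda>(\<rho>(z) - 1/K!) mubar(z) \<noteq> 0\<close>, so a small \<open>t\<close> of the right sign gives a value below \<open>\<lambda>/K!\<close>.\<close>

definition dirichlet_form :: "'a set \<Rightarrow> ('a \<Rightarrow> 'a \<Rightarrow> real) \<Rightarrow> ('a \<Rightarrow> real) \<Rightarrow> ('a \<Rightarrow> real) \<Rightarrow> real"
  where "dirichlet_form A R w g = (\<Sum>x\<in>A. \<Sum>y\<in>A - {x}. (g x - g y)\<^sup>2 * R x y * w x) / 2"

lemma quadratic_form_eq_dirichlet_form:
  fixes R :: "'a \<Rightarrow> 'a \<Rightarrow> real"
  assumes A: "finite A" and balance: "\<And>x y. w x * R x y = w y * R y x"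
  shows "(\<Sum>x\<in>A. (\<Sum>y\<in>A - {x}. R x y) * (g x)\<^sup>2 * w x)
           - (\<Sum>x\<in>A. \<Sum>y\<in>A - {x}. g x * g y * R x y * w x)
         = dirichlet_form A R w g"
proof -
  have off_diag: "A - {x} = {y. y \<in> A \<and> x \<noteq> y}" for x by auto
  have "(\<Sum>x\<in>A. \<Sum>y\<in>A - {x}. (g y)\<^sup>2 * R x y * w x) = (\<Sum>x\<in>A. \<Sum>y\<in>A - {x}. (g y)\<^sup>2 * R y x * w y)"
    by (simp add: balance mult.assoc mult.commute[of "R _ _" "w _"])
  also have "\<dots> = (\<Sum>y\<in>A. \<Sum>x\<in>A - {y}. (g y)\<^sup>2 * R y x * w y)"
    unfolding off_diag by (subst sum.swap_restrict[OF A A]) (auto intro!: sum.cong)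
  also have "\<dots> = (\<Sum>x\<in>A. (\<Sum>y\<in>A - {x}. R x y) * (g x)\<^sup>2 * w x)"
    by (simp add: sum_distrib_left sum_distrib_right mult_ac)
  finally have swap: "(\<Sum>x\<in>A. \<Sum>y\<in>A - {x}. (g y)\<^sup>2 * R x y * w x)
      = (\<Sum>x\<in>A. (\<Sum>y\<in>A - {x}. R x y) * (g x)\<^sup>2 * w x)" .
  have "(\<Sum>x\<in>A. \<Sum>y\<in>A - {x}. (g x - g y)\<^sup>2 * R x y * w x)
      = (\<Sum>x\<in>A. (\<Sum>y\<in>A - {x}. R x y) * (g x)\<^sup>2 * w x)
        - 2 * (\<Sum>x\<in>A. \<Sum>y\<in>A - {x}. g x * g y * R x y * w x)
        + (\<Sum>x\<in>A. \<Sum>y\<in>A - {x}. (g y)\<^sup>2 * R x y * w x)"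
    by (simp add: power2_diff algebra_simps sum.distrib sum_subtractf sum_distrib_left
        sum_distrib_right)
  then show ?thesis
    unfolding dirichlet_form_def swap by simp
qed

lemma dirichlet_form_nonneg:
  assumes "\<And>x y. x \<in> A \<Longrightarrow> y \<in> A \<Longrightarrow> x \<noteq> y \<Longrightarrow> R x y \<ge> 0" and "\<And>x. x \<in> A \<Longrightarrow> w x \<ge> 0"
  shows "dirichlet_form A R w g \<ge> 0"
  unfolding dirichlet_form_def using assms by (auto intro!: sum_nonneg mult_nonneg_nonneg)

lemma dirichlet_form_scale:
  "dirichlet_form A R w (\<lambda>x. c * g x) = c\<^sup>2 * dirichlet_form A R w g"
  unfolding dirichlet_form_def
  by (simp add: sum_distrib_left power2_eq_square algebra_simps)

lemma dirichlet_form_bump: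
  fixes R :: "'a \<Rightarrow> 'a \<Rightarrow> real"
  assumes A: "finite A" and z: "z \<in> A" and balance: "\<And>x y. w x * R x y = w y * R y x"
  shows "dirichlet_form A R w (\<lambda>x. if x = z then s else 1) = (s - 1)\<^sup>2 * (\<Sum>y\<in>A - {z}. R z y) * w z"
proof -
  let ?f = "\<lambda>x. if x = z then s else 1"
  have from_z: "(\<Sum>y\<in>A - {z}. (?f z - ?f y)\<^sup>2 * R z y * w z) = (s - 1)\<^sup>2 * (\<Sum>y\<in>A - {z}. R z y) * w z"
    by (simp add: sum_distrib_left sum_distrib_right mult_ac)
  have into_z: "(\<Sum>y\<in>A - {x}. (?f x - ?f y)\<^sup>2 * R x y * w x) = (s - 1)\<^sup>2 * R z x * w z"
    if x: "x \<in> A - {z}" for x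
  proof -
    have "(\<Sum>y\<in>A - {x}. (?f x - ?f y)\<^sup>2 * R x y * w x)
        = (\<Sum>y\<in>A - {x}. if y = z then (s - 1)\<^sup>2 * R z x * w z else 0)"
      using x balance[of x z] by (intro sum.cong) (auto simp: power2_commute mult_ac)
    then show ?thesis using A x z by auto
  qed
  have "(\<Sum>x\<in>A. \<Sum>y\<in>A - {x}. (?f x - ?f y)\<^sup>2 * R x y * w x)
      = (s - 1)\<^sup>2 * (\<Sum>y\<in>A - {z}. R z y) * w z + (\<Sum>x\<in>A - {z}. (s - 1)\<^sup>2 * R z x * w z)"
    by (simp only: sum.remove[OF A z] from_z sum.cong[OF refl into_z])
  also have "\<dots> = 2 * ((s - 1)\<^sup>2 * (\<Sum>y\<in>A - {z}. R z y) * w z)"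
    by (simp add: sum_distrib_left sum_distrib_right mult_ac)
  finally show ?thesis
    unfolding dirichlet_form_def by simp
qed

lemma invariant_distribution_pos:
  fixes G :: "'a::finite \<Rightarrow> 'a \<Rightarrow> real"
  assumes irr: "irreducible_rates G" and inv: "invariant_distribution G m" and rev: "reversible G m"
  shows "m a > 0"
proof -
  have nonneg: "\<And>x. m x \<ge> 0" and total: "(\<Sum>x\<in>UNIV. m x) = 1"
    using inv unfolding invariant_distribution_def distribution_def by auto
  obtain b where b: "m b > 0"
    using total sum_nonpos[of UNIV m] by (metis not_le not_one_le_zero)
  have "(b, a) \<in> {(a, b). a \<noteq> b \<and> G a b > 0}\<^sup>*"
    using irr unfolding irreducible_rates_def by blast
  then show ?thesis
  proof (induction rule: rtrancl_induct)
    case base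
    show ?case using b .
  next
    case (step y z)
    have "m z * G z y = m y * G y z"
      using rev unfolding reversible_def by blast
    moreover have "m y * G y z > 0"
      using step by auto
    ultimately show ?case
      using nonneg[of z] by (metis less_eq_real_def mult_zero_left)
  qed
qed

lemma finite_states: "finite (states K :: (nat \<Rightarrow> 'a::finite) set)"
  unfolding states_def by (intro finite_PiE) auto

lemma finite_perms: "finite (perms K)"
  unfolding perms_def by (simp add: finite_permutations)

lemma id_in_perms: "id \<in> perms K"
  unfolding perms_def by simp

lemma card_perms: "card (perms K) = fact K"
  unfolding perms_def using card_permutations[of "{0..<K}" K] by simp

lemma perm_state_id [simp]: "perm_state x id = x"
  unfolding perm_state_def by simp

lemma perm_state_comp:
  assumes "\<sigma> permutes {0..<K}" "\<tau> permutes {0..<K}"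
  shows "perm_state (perm_state x \<sigma>) \<tau> = perm_state x (\<tau> \<circ> \<sigma>)"
  using assms unfolding perm_state_def by (simp add: o_assoc o_inv_distrib permutes_bij)

lemma perm_state_in_states:
  assumes "\<sigma> permutes {0..<K}" "x \<in> states K"
  shows "perm_state x \<sigma> \<in> states K"
  using assms(2) permutes_not_in[OF permutes_inv[OF assms(1)]]
  unfolding states_def perm_state_def PiE_def extensional_def by auto

lemma sum_states_perm_state:
  fixes F :: "(nat \<Rightarrow> 'a) \<Rightarrow> 'b::comm_monoid_add"
  assumes \<sigma>: "\<sigma> permutes {0..<K}"
  shows "(\<Sum>x\<in>states K. F (perm_state x \<sigma>)) = (\<Sum>x\<in>states K. F x)"
proof (rule sum.reindex_bij_witness[where i="\<lambda>x. perm_state x (inv \<sigma>)" and j="\<lambda>x. perm_state x \<sigma>"])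
  have \<sigma>': "inv \<sigma> permutes {0..<K}" using \<sigma> by (rule permutes_inv)
  fix x assume x: "x \<in> states K"
  show "perm_state (perm_state x \<sigma>) (inv \<sigma>) = x"
    by (simp add: perm_state_comp[OF \<sigma> \<sigma>'] permutes_inv_o(2)[OF \<sigma>])
  show "perm_state (perm_state x (inv \<sigma>)) \<sigma> = x"
    by (simp add: perm_state_comp[OF \<sigma>' \<sigma>] permutes_inv_o(1)[OF \<sigma>])
  show "perm_state x (inv \<sigma>) \<in> states K" "perm_state x \<sigma> \<in> states K"
    using perm_state_in_states[OF \<sigma>' x] perm_state_in_states[OF \<sigma> x] by auto
qed simp

lemma sum_perms_perm_state:
  assumes \<sigma>: "\<sigma> permutes {0..<K}"
  shows "(\<Sum>\<tau>\<in>perms K. F (perm_state (perm_state x \<sigma>) \<tau>)) = (\<Sum>\<tau>\<in>perms K. F (perm_state x \<tau>))"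
proof (rule sum.reindex_bij_witness[where i="\<lambda>\<tau>. \<tau> \<circ> inv \<sigma>" and j="\<lambda>\<tau>. \<tau> \<circ> \<sigma>"])
  have \<sigma>': "inv \<sigma> permutes {0..<K}" using \<sigma> by (rule permutes_inv)
  fix \<tau> assume "\<tau> \<in> perms K"
  then have \<tau>: "\<tau> permutes {0..<K}" unfolding perms_def by simp
  show "\<tau> \<circ> \<sigma> \<circ> inv \<sigma> = \<tau>" "\<tau> \<circ> inv \<sigma> \<circ> \<sigma> = \<tau>"
    using permutes_inv_o[OF \<sigma>] by (simp_all add: o_assoc[symmetric])
  show "\<tau> \<circ> inv \<sigma> \<in> perms K" "\<tau> \<circ> \<sigma> \<in> perms K"
    using permutes_compose[OF \<sigma>' \<tau>] permutes_compose[OF \<sigma> \<tau>] unfolding perms_def by auto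
  show "F (perm_state x (\<tau> \<circ> \<sigma>)) = F (perm_state (perm_state x \<sigma>) \<tau>)"
    by (simp add: perm_state_comp[OF \<sigma> \<tau>])
qed

lemma sum_states_mu_prod:
  fixes mu :: "nat \<Rightarrow> 'a::finite \<Rightarrow> real"
  assumes "\<forall>k<K. (\<Sum>a\<in>UNIV. mu k a) = 1"
  shows "(\<Sum>x\<in>states K. mu_prod K mu x) = 1"
proof -
  have "(\<Sum>x\<in>states K. mu_prod K mu x) = (\<Prod>k\<in>{0..<K}. \<Sum>a\<in>UNIV. mu k a)"
    unfolding states_def mu_prod_def atLeast0LessThan[symmetric] by (rule prod_sum_PiE[symmetric]) auto
  then show ?thesis using assms by simp
qed

lemma mu_prod_pos: "\<forall>k<K. \<forall>a. mu k a > 0 \<Longrightarrow> mu_prod K mu x > 0"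
  unfolding mu_prod_def by (intro prod_pos) auto

lemma sum_perms_mu_prod_pos:
  assumes "\<forall>k<K. \<forall>a. mu k a > 0"
  shows "(\<Sum>\<sigma>\<in>perms K. mu_prod K mu (perm_state x \<sigma>)) > 0"
  using mu_prod_pos[OF assms] finite_perms id_in_perms by (intro sum_pos) auto

lemma mubar_pos: "\<forall>k<K. \<forall>a. mu k a > 0 \<Longrightarrow> mubar K mu x > 0"
  unfolding mubar_def using sum_perms_mu_prod_pos[of K mu x] by simp

lemma rho_nonneg: "\<forall>k<K. \<forall>a. mu k a \<ge> 0 \<Longrightarrow> rho K mu x \<ge> 0"
  unfolding rho_def mu_prod_def by (auto intro!: divide_nonneg_nonneg sum_nonneg prod_nonneg)

lemma mubar_mult_rho_perm_state:
  assumes mu_pos: "\<forall>k<K. \<forall>a. mu k a > 0" and "\<sigma> \<in> perms K"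
  shows "mubar K mu x * rho K mu (perm_state x \<sigma>) = mu_prod K mu (perm_state x \<sigma>) / fact K"
proof -
  have "\<sigma> permutes {0..<K}" using assms(2) unfolding perms_def by simp
  from sum_perms_perm_state[OF this, of "mu_prod K mu"] sum_perms_mu_prod_pos[OF mu_pos, of x]
  show ?thesis
    unfolding mubar_def rho_def by (simp add: field_simps)
qed

lemma sum_states_mubar:
  fixes mu :: "nat \<Rightarrow> 'a::finite \<Rightarrow> real"
  assumes "\<forall>k<K. (\<Sum>a\<in>UNIV. mu k a) = 1"
  shows "(\<Sum>x\<in>states K. mubar K mu x) = 1"
proof -
  have "(\<Sum>x\<in>states K. mubar K mu x)
      = (\<Sum>\<sigma>\<in>perms K. \<Sum>x\<in>states K. mu_prod K mu (perm_state x \<sigma>)) / fact K"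
    unfolding mubar_def by (subst sum.swap) (simp add: sum_divide_distrib)
  also have "\<dots> = (\<Sum>\<sigma>\<in>perms K. 1) / fact K"
    by (intro arg_cong[where f="\<lambda>s. s / fact K"] sum.cong refl)
      (simp add: perms_def sum_states_perm_state sum_states_mu_prod[OF assms])
  finally show ?thesis by (simp add: card_perms)
qed

lemma sum_states_rho_mubar:
  fixes mu :: "nat \<Rightarrow> 'a::finite \<Rightarrow> real"
  assumes "\<forall>k<K. (\<Sum>a\<in>UNIV. mu k a) = 1" and "\<forall>k<K. \<forall>a. mu k a > 0"
  shows "(\<Sum>x\<in>states K. rho K mu x * mubar K mu x) = 1 / fact K"
  using mubar_mult_rho_perm_state[OF assms(2) id_in_perms] sum_states_mu_prod[OF assms(1)]
  by (simp add: mult.commute sum_divide_distrib[symmetric])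

lemma mu_prod_perm_state_balance:
  assumes rev: "\<forall>k<K. reversible (G k) (mu k)"
    and i: "i < K" and same: "\<forall>j<K. j \<noteq> i \<longrightarrow> x j = y j" and \<sigma>: "\<sigma> permutes {0..<K}"
  shows "mu_prod K mu (perm_state x \<sigma>) * G (\<sigma> i) (x i) (y i)
       = mu_prod K mu (perm_state y \<sigma>) * G (\<sigma> i) (y i) (x i)"
proof -
  have \<sigma>i: "\<sigma> i \<in> {..<K}" using permutes_in_image[OF \<sigma>] i by auto
  have inv_\<sigma>i: "inv \<sigma> (\<sigma> i) = i" using permutes_inverses(2)[OF \<sigma>] by simp
  have split: "mu_prod K mu (perm_state v \<sigma>)
      = mu (\<sigma> i) (v i) * (\<Prod>k\<in>{..<K} - {\<sigma> i}. mu k (v (inv \<sigma> k)))" for v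
    unfolding mu_prod_def perm_state_def
    using prod.remove[OF _ \<sigma>i, of "\<lambda>k. mu k (v (inv \<sigma> k))"] inv_\<sigma>i by simp
  have rest: "(\<Prod>k\<in>{..<K} - {\<sigma> i}. mu k (x (inv \<sigma> k))) = (\<Prod>k\<in>{..<K} - {\<sigma> i}. mu k (y (inv \<sigma> k)))"
  proof (rule prod.cong)
    fix k assume k: "k \<in> {..<K} - {\<sigma> i}"
    have "inv \<sigma> k < K" using permutes_in_image[OF permutes_inv[OF \<sigma>]] k by auto
    moreover have "inv \<sigma> k \<noteq> i" using k permutes_inverses(1)[OF \<sigma>, of k] by auto
    ultimately show "mu k (x (inv \<sigma> k)) = mu k (y (inv \<sigma> k))" using same by simp
  qed simp
  have "mu (\<sigma> i) (x i) * G (\<sigma> i) (x i) (y i) = mu (\<sigma> i) (y i) * G (\<sigma> i) (y i) (x i)"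
    using rev \<sigma>i unfolding reversible_def by auto
  from arg_cong[where f="\<lambda>v. v * (\<Prod>k\<in>{..<K} - {\<sigma> i}. mu k (y (inv \<sigma> k)))", OF this]
  show ?thesis
    unfolding split rest by (simp only: ac_simps)
qed

lemma mubar_mult_Ginf:
  assumes "\<forall>k<K. \<forall>a. mu k a > 0"
  shows "mubar K mu x * Ginf K G mu x y = (\<Sum>i<K. if x i \<noteq> y i \<and> (\<forall>j<K. j \<noteq> i \<longrightarrow> x j = y j)
      then (\<Sum>\<sigma>\<in>perms K. mu_prod K mu (perm_state x \<sigma>) * G (\<sigma> i) (x i) (y i)) / fact K else 0)"
proof -
  have "(\<Sum>\<sigma>\<in>perms K. mubar K mu x * (rho K mu (perm_state x \<sigma>) * G (\<sigma> i) (x i) (y i)))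
      = (\<Sum>\<sigma>\<in>perms K. mu_prod K mu (perm_state x \<sigma>) * G (\<sigma> i) (x i) (y i)) / fact K" for i
    by (simp add: sum_divide_distrib mult.assoc[symmetric] mubar_mult_rho_perm_state[OF assms]
        cong: sum.cong)
  then show ?thesis
    unfolding Ginf_def sum_distrib_left if_distrib[where f="\<lambda>v. mubar K mu x * v"] mult_zero_right
    by (simp only:)
qed

lemma mubar_Ginf_sym:
  assumes mu_pos: "\<forall>k<K. \<forall>a. mu k a > 0" and rev: "\<forall>k<K. reversible (G k) (mu k)"
  shows "mubar K mu x * Ginf K G mu x y = mubar K mu y * Ginf K G mu y x"
proof -
  have swap: "(\<Sum>\<sigma>\<in>perms K. mu_prod K mu (perm_state x \<sigma>) * G (\<sigma> i) (x i) (y i))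
      = (\<Sum>\<sigma>\<in>perms K. mu_prod K mu (perm_state y \<sigma>) * G (\<sigma> i) (y i) (x i))"
    if i: "i < K" and "\<forall>j<K. j \<noteq> i \<longrightarrow> y j = x j" for i
  proof -
    have "\<forall>j<K. j \<noteq> i \<longrightarrow> x j = y j" using that(2) by auto
    from mu_prod_perm_state_balance[OF rev i this] show ?thesis
      by (intro sum.cong) (auto simp: perms_def)
  qed
  show ?thesis
    unfolding mubar_mult_Ginf[OF mu_pos]
    by (intro sum.cong refl if_cong) (auto simp: swap)
qed

lemma Ginf_nonneg:
  assumes intens: "\<forall>k<K. intensity_matrix (G k)" and mu_nonneg: "\<forall>k<K. \<forall>a. mu k a \<ge> 0"
  shows "Ginf K G mu x y \<ge> 0"
proof -
  have G_nonneg: "G (\<sigma> i) a b \<ge> 0" if "\<sigma> \<in> perms K" "i < K" "a \<noteq> b" for \<sigma> i a b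
    using that permutes_in_image[of \<sigma> "{0..<K}" i] intens
    unfolding perms_def intensity_matrix_def by auto
  show ?thesis
    unfolding Ginf_def using rho_nonneg[OF mu_nonneg] G_nonneg
    by (auto intro!: sum_nonneg mult_nonneg_nonneg)
qed

lemma Jfun_eq_dirichlet_form:
  fixes G :: "nat \<Rightarrow> 'a::finite \<Rightarrow> 'a \<Rightarrow> real"
  assumes mu_pos: "\<forall>k<K. \<forall>a. mu k a > 0" and rev: "\<forall>k<K. reversible (G k) (mu k)"
    and nonneg: "\<forall>x\<in>states K. \<nu> x \<ge> 0"
  shows "Jfun K G mu \<nu>
       = dirichlet_form (states K) (Ginf K G mu) (mubar K mu) (\<lambda>x. sqrt (\<nu> x / mubar K mu x))"
proof -
  have "\<nu> x / mubar K mu x = (sqrt (\<nu> x / mubar K mu x))\<^sup>2" if "x \<in> states K" for x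
    using nonneg that mubar_pos[OF mu_pos, of x] by simp
  then have first_sum: "(\<Sum>x\<in>states K. qinf K G mu x * (\<nu> x / mubar K mu x) * mubar K mu x)
      = (\<Sum>x\<in>states K. (\<Sum>y\<in>states K - {x}. Ginf K G mu x y) * (sqrt (\<nu> x / mubar K mu x))\<^sup>2 * mubar K mu x)"
    unfolding qinf_def by (intro sum.cong) auto
  show ?thesis
    unfolding Jfun_def Let_def first_sum
    by (rule quadratic_form_eq_dirichlet_form[OF finite_states mubar_Ginf_sym[OF mu_pos rev]])
qed

lemma Jfun_nonneg:
  fixes G :: "nat \<Rightarrow> 'a::finite \<Rightarrow> 'a \<Rightarrow> real"
  assumes "\<forall>k<K. \<forall>a. mu k a > 0" "\<forall>k<K. reversible (G k) (mu k)" "\<forall>k<K. intensity_matrix (G k)"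
    and "\<forall>x\<in>states K. \<nu> x \<ge> 0"
  shows "Jfun K G mu \<nu> \<ge> 0"
  unfolding Jfun_eq_dirichlet_form[OF assms(1,2,4)]
  using Ginf_nonneg[OF assms(3)] mubar_pos[OF assms(1)] assms(1)
  by (intro dirichlet_form_nonneg) (auto simp: less_imp_le)

lemma sum_bump_square:
  fixes a :: "'a \<Rightarrow> real"
  assumes "finite A" "z \<in> A"
  shows "(\<Sum>x\<in>A. (if x = z then s else 1)\<^sup>2 * a x) = (\<Sum>x\<in>A. a x) + (s\<^sup>2 - 1) * a z"
proof -
  have "(if x = z then s else 1)\<^sup>2 * a x = a x + (if x = z then (s\<^sup>2 - 1) * a z else 0)" for x
    by (simp add: algebra_simps)
  then show ?thesis using assms by (simp add: sum.distrib)
qed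

definition bump_distribution :: "nat \<Rightarrow> (nat \<Rightarrow> 'a \<Rightarrow> real) \<Rightarrow> (nat \<Rightarrow> 'a) \<Rightarrow> real \<Rightarrow> (nat \<Rightarrow> 'a) \<Rightarrow> real"
  where "bump_distribution K mu z s x
    = (if x = z then s else 1)\<^sup>2 * mubar K mu x / (1 + (s\<^sup>2 - 1) * mubar K mu z)"

lemma cost_of_bump_distribution:
  fixes G :: "nat \<Rightarrow> 'a::finite \<Rightarrow> 'a \<Rightarrow> real"
  assumes mu_pos: "\<forall>k<K. \<forall>a. mu k a > 0" and mu_sum: "\<forall>k<K. (\<Sum>a\<in>UNIV. mu k a) = 1"
    and rev: "\<forall>k<K. reversible (G k) (mu k)" and z: "z \<in> states K" and s: "s > 0"
  shows "1 + (s\<^sup>2 - 1) * mubar K mu z > 0" and "bump_distribution K mu z s \<in> prob_states K"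
    and "Jfun K G mu (bump_distribution K mu z s)
           + (\<Sum>x\<in>states K. lam * rho K mu x * bump_distribution K mu z s x)
         = ((s - 1)\<^sup>2 * qinf K G mu z * mubar K mu z
             + lam * (1 / fact K + (s\<^sup>2 - 1) * rho K mu z * mubar K mu z))
           / (1 + (s\<^sup>2 - 1) * mubar K mu z)"
proof -
  define f where "f x = (if x = z then s else 1)" for x
  define Z where "Z = 1 + (s\<^sup>2 - 1) * mubar K mu z"
  define \<nu> where "\<nu> = bump_distribution K mu z s"
  have \<nu>_eq: "\<nu> x = (f x)\<^sup>2 * mubar K mu x / Z" for x
    unfolding \<nu>_def bump_distribution_def f_def Z_def ..
  have f_pos: "f x > 0" for x
    using s by (simp add: f_def)
  have Z_sum: "(\<Sum>x\<in>states K. (f x)\<^sup>2 * mubar K mu x) = Z"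
    unfolding f_def Z_def
    using sum_bump_square[OF finite_states z] sum_states_mubar[OF mu_sum] by simp
  have Z: "Z > 0"
    unfolding Z_sum[symmetric] using z f_pos mubar_pos[OF mu_pos]
    by (auto intro!: sum_pos mult_pos_pos zero_less_power simp: finite_states)
  then show "1 + (s\<^sup>2 - 1) * mubar K mu z > 0"
    unfolding Z_def .
  show "bump_distribution K mu z s \<in> prob_states K"
    unfolding \<nu>_def[symmetric] prob_states_def \<nu>_eq using Z mubar_pos[OF mu_pos] Z_sum
    by (auto simp: sum_divide_distrib[symmetric] less_imp_le)
  have sqrt_density: "(\<lambda>x. sqrt (\<nu> x / mubar K mu x)) = (\<lambda>x. (1 / sqrt Z) * f x)"
  proof
    fix x
    have "\<nu> x / mubar K mu x = (f x)\<^sup>2 / Z"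
      using mubar_pos[OF mu_pos, of x] by (simp add: \<nu>_eq)
    then show "sqrt (\<nu> x / mubar K mu x) = (1 / sqrt Z) * f x"
      using f_pos[of x] by (simp add: real_sqrt_divide)
  qed
  have \<nu>_nonneg: "\<forall>x\<in>states K. \<nu> x \<ge> 0"
    using Z mubar_pos[OF mu_pos] by (simp add: \<nu>_eq less_imp_le)
  have "Jfun K G mu \<nu> = (1 / sqrt Z)\<^sup>2 * dirichlet_form (states K) (Ginf K G mu) (mubar K mu) f"
    unfolding Jfun_eq_dirichlet_form[OF mu_pos rev \<nu>_nonneg] sqrt_density by (rule dirichlet_form_scale)
  also have "dirichlet_form (states K) (Ginf K G mu) (mubar K mu) f
      = (s - 1)\<^sup>2 * qinf K G mu z * mubar K mu z"
    unfolding f_def[abs_def] qinf_def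
    by (rule dirichlet_form_bump[OF finite_states z mubar_Ginf_sym[OF mu_pos rev]])
  also have "(1 / sqrt Z)\<^sup>2 * ((s - 1)\<^sup>2 * qinf K G mu z * mubar K mu z)
      = (s - 1)\<^sup>2 * qinf K G mu z * mubar K mu z / Z"
    using Z by (simp add: power_divide)
  finally have J: "Jfun K G mu \<nu> = (s - 1)\<^sup>2 * qinf K G mu z * mubar K mu z / Z" .
  have "(\<Sum>x\<in>states K. lam * rho K mu x * \<nu> x)
      = lam * (\<Sum>x\<in>states K. (f x)\<^sup>2 * (rho K mu x * mubar K mu x)) / Z"
    by (simp add: \<nu>_eq sum_distrib_left sum_divide_distrib mult_ac)
  also have "\<dots> = lam * (1 / fact K + (s\<^sup>2 - 1) * rho K mu z * mubar K mu z) / Z"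
    unfolding f_def sum_bump_square[OF finite_states z] sum_states_rho_mubar[OF mu_sum mu_pos]
    by (simp add: mult.assoc)
  finally show "Jfun K G mu (bump_distribution K mu z s)
           + (\<Sum>x\<in>states K. lam * rho K mu x * bump_distribution K mu z s x)
         = ((s - 1)\<^sup>2 * qinf K G mu z * mubar K mu z
             + lam * (1 / fact K + (s\<^sup>2 - 1) * rho K mu z * mubar K mu z))
           / (1 + (s\<^sup>2 - 1) * mubar K mu z)"
    unfolding \<nu>_def[symmetric] J Z_def[symmetric] by (simp add: add_divide_distrib)
qed

lemma exists_quadratic_neg:
  fixes a c :: real
  assumes "c \<noteq> 0"
  obtains t where "t > -1" "t\<^sup>2 * a + 2 * t * c < 0"
proof -
  define e where "e = min (1/2) (\<bar>c\<bar> / (\<bar>a\<bar> + 1))"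
  have e_pos: "e > 0" unfolding e_def using assms by simp
  have "e \<le> \<bar>c\<bar> / (\<bar>a\<bar> + 1)" unfolding e_def by (rule min.cobounded2)
  then have e_small: "e * (\<bar>a\<bar> + 1) \<le> \<bar>c\<bar>"
    by (simp add: pos_le_divide_eq add_nonneg_pos)
  define t where "t = (if c > 0 then - e else e)"
  have "t\<^sup>2 * a + 2 * t * c = e\<^sup>2 * a - 2 * e * \<bar>c\<bar>"
    unfolding t_def using assms by (auto simp: abs_if)
  also have "\<dots> \<le> e * (e * \<bar>a\<bar>) - 2 * e * \<bar>c\<bar>"
    using mult_left_mono[OF abs_ge_self[of a], of "e\<^sup>2"] by (simp add: power2_eq_square mult.assoc)
  also have "\<dots> < 0"
    using e_small e_pos assms by (simp add: algebra_simps)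
  finally have "t\<^sup>2 * a + 2 * t * c < 0" .
  moreover have "t > -1"
    unfolding t_def using e_pos min.cobounded1[of "1/2" "\<bar>c\<bar> / (\<bar>a\<bar> + 1)"] e_def by auto
  ultimately show ?thesis
    using that by blast
qed

lemma total_cost_nonneg:
  fixes G :: "nat \<Rightarrow> 'a::finite \<Rightarrow> 'a \<Rightarrow> real"
  assumes mu_pos: "\<forall>k<K. \<forall>a. mu k a > 0" and rev: "\<forall>k<K. reversible (G k) (mu k)"
    and intens: "\<forall>k<K. intensity_matrix (G k)" and lam: "lam \<ge> 0" and \<nu>: "\<nu> \<in> prob_states K"
  shows "Jfun K G mu \<nu> + (\<Sum>x\<in>states K. lam * rho K mu x * \<nu> x) \<ge> 0"
proof -
  have \<nu>_nonneg: "\<forall>x\<in>states K. \<nu> x \<ge> 0"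
    using \<nu> unfolding prob_states_def by simp
  have "(\<Sum>x\<in>states K. lam * rho K mu x * \<nu> x) \<ge> 0"
    using \<nu>_nonneg lam rho_nonneg[of K mu] mu_pos
    by (intro sum_nonneg) (simp add: less_imp_le)
  then show ?thesis
    using Jfun_nonneg[OF mu_pos rev intens \<nu>_nonneg] by linarith
qed

lemma exists_prob_below_uniform_cost:
  fixes G :: "nat \<Rightarrow> 'a::finite \<Rightarrow> 'a \<Rightarrow> real"
  assumes mu_pos: "\<forall>k<K. \<forall>a. mu k a > 0" and mu_sum: "\<forall>k<K. (\<Sum>a\<in>UNIV. mu k a) = 1"
    and rev: "\<forall>k<K. reversible (G k) (mu k)"
    and z: "z \<in> states K" and rho_z: "rho K mu z \<noteq> 1 / fact K" and lam: "lam \<noteq> 0"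
  shows "\<exists>\<nu>\<in>prob_states K. Jfun K G mu \<nu> + (\<Sum>x\<in>states K. lam * rho K mu x * \<nu> x) < lam / fact K"
proof -
  define m where "m = mubar K mu z"
  define q where "q = qinf K G mu z"
  define c where "c = lam * (rho K mu z - 1 / fact K)"
  have "c \<noteq> 0"
    using rho_z lam by (simp add: c_def)
  then obtain t where t: "t > -1" "t\<^sup>2 * (q + c) + 2 * t * c < 0"
    by (rule exists_quadratic_neg)
  define Z where "Z = 1 + ((1 + t)\<^sup>2 - 1) * m"
  define V where "V = t\<^sup>2 * q * m + lam * (1 / fact K + ((1 + t)\<^sup>2 - 1) * rho K mu z * m)"
  have "1 + t > 0" using t(1) by simp
  note bump = cost_of_bump_distribution[OF mu_pos mu_sum rev z this, folded m_def q_def, folded Z_def]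
  have "V - lam / fact K * Z = m * (t\<^sup>2 * (q + c) + 2 * t * c)"
    unfolding V_def Z_def c_def by (simp add: algebra_simps power2_eq_square)
  also have "\<dots> < 0"
    using t(2) mubar_pos[OF mu_pos] by (simp add: m_def mult_pos_neg)
  finally have "V / Z < lam / fact K"
    using bump(1) by (simp add: pos_divide_less_eq)
  moreover have "Jfun K G mu (bump_distribution K mu z (1 + t))
      + (\<Sum>x\<in>states K. lam * rho K mu x * bump_distribution K mu z (1 + t) x) = V / Z"
    using bump(3)[of lam] by (simp add: V_def)
  ultimately show ?thesis
    using bump(2) by (intro bexI[of _ "bump_distribution K mu z (1 + t)"]) simp_all
qed

theorem lemmaA2:
  fixes K :: nat
    and G :: "nat \<Rightarrow> 'a::finite \<Rightarrow> 'a \<Rightarrow> real"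
    and mu :: "nat \<Rightarrow> 'a \<Rightarrow> real"
    and lam :: real
  assumes K2: "K \<ge> 2"
    and intens: "\<forall>k<K. intensity_matrix (G k)"
    and irred: "\<forall>k<K. irreducible_rates (G k)"
    and inv: "\<forall>k<K. invariant_distribution (G k) (mu k)"
    and uniq: "\<forall>k<K. \<forall>m. invariant_distribution (G k) m \<longrightarrow> m = mu k"
    and rev: "\<forall>k<K. reversible (G k) (mu k)"
    and nonconst: "\<exists>x\<in>states K. \<exists>y\<in>states K. rho K mu x \<noteq> rho K mu y"
    and lam_pos: "lam > 0"
  shows "(INF \<nu>\<in>prob_states K. Jfun K G mu \<nu> + (\<Sum>x\<in>states K. lam * rho K mu x * \<nu> x))
           < lam / fact K"
proof -
  define F where "F \<nu> = Jfun K G mu \<nu> + (\<Sum>x\<in>states K. lam * rho K mu x * \<nu> x)" for \<nu>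
  have mu_pos: "\<forall>k<K. \<forall>a. mu k a > 0"
    using invariant_distribution_pos irred inv rev by blast
  have mu_sum: "\<forall>k<K. (\<Sum>a\<in>UNIV. mu k a) = 1"
    using inv unfolding invariant_distribution_def distribution_def by blast
  obtain z where z: "z \<in> states K" "rho K mu z \<noteq> 1 / fact K"
    using nonconst by metis
  have "lam \<noteq> 0"
    using lam_pos by simp
  from exists_prob_below_uniform_cost[OF mu_pos mu_sum rev z this]
  obtain \<nu> where "\<nu> \<in> prob_states K" "F \<nu> < lam / fact K"
    unfolding F_def by auto
  moreover have "bdd_below (F ` prob_states K)"
    using total_cost_nonneg[OF mu_pos rev intens less_imp_le[OF lam_pos]] unfolding F_def
    by (intro bdd_belowI2) blast
  ultimately have "(INF \<nu>\<in>prob_states K. F \<nu>) < lam / fact K"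
    using cINF_less_iff[of "prob_states K" F] by blast
  then show ?thesis
    unfolding F_def .
qed

end
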